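(* For each $k\in\mathbb{Z}_{\geq0}$, the set \[ S_k=\left\{F([u]):=\frac{\delta^l(l_u)[1\oplus\cdots\oplus1]}{|(\mathbb{Z}_{k+1})_u|\sqrt{|[u]|}}\ \middle|\ [u]\in [n]^{k+1}/\mathbb{Z}_{k+1}\right\}\subset\big[(\mathbb{C}^n)^{\otimes k}\big]^n \] (which is well defined, i.e. $F([u])$ does not depend on the representative $u$ of the orbit) is an orthonormal basis of the subspace $\delta^l\big((\mathbb{C}^l_{\langle n\rangle})_{k+1}\big)[1\oplus\cdots\oplus1]$ of $\mathcal{F}(\mathbb{C}^n)^n$.
   Context: Let $n\geq1$, $\{e_1,\dots,e_n\}$ an orthonormal basis of $\mathbb{C}^n$, $\{f_1,\dots,f_n\}$ the standard basis of $\mathbb{C}^n$. The full Fock space is $\mathcal{F}(\mathbb{C}^n)=\mathbb{C}1\oplus\bigoplus_{k\geq1}(\mathbb{C}^n)^{\otimes k}$. Let $[n]^k$ be the set of words $i_1\cdots i_k$ of length $k$ over $[n]=\{1,\dots,n\}$, $e_{i_1\cdots i_k}=e_{i_1}\otimes\cdots\otimes e_{i_k}$, $e_\epsilon=1$. Let $l_j$ be the left creation operator $l_je_w=e_{jw}$, and for a word $u=u_1\cdots u_p$ put $l_u=l_{u_1}\cdots l_{u_p}$. Let $\mathbb{C}^l_{\langle n\rangle}$ be the unital algebra generated by $l_1,\dots,l_n$ and $(\mathbb{C}^l_{\langle n\rangle})_{k+1}$ the linear span of the monomials $l_u$, $u\in[n]^{k+1}$. The cyclic gradient $\delta^l:\mathbb{C}^l_{\langle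 n\rangle}\to(\mathbb{C}^l_{\langle n\rangle})^n\cong\mathbb{C}^l_{\langle n\rangle}\otimes\mathbb{C}^n$ is the linear map with $\delta^l(l_{i_1}\cdots l_{i_p})=\sum_{j=1}^p l_{i_{j+1}}\cdots l_{i_p}l_{i_1}\cdots l_{i_{j-1}}\otimes f_{i_j}$. For $(x_1,\dots,x_n)$ a tuple of operators, $(x_1,\dots,x_n)[1\oplus\cdots\oplus1]=(x_11,\dots,x_n1)\in\mathcal{F}(\mathbb{C}^n)^n$; for a subspace $V$ of tuples, $V[1\oplus\cdots\oplus1]$ is the set of such images. The cyclic group $\mathbb{Z}_{k}=\mathbb{Z}/k\mathbb{Z}$ acts on $[n]^{k}$ via the rotation $R(i_1\cdots i_{k-1}i_k)=i_ki_1\cdots i_{k-1}$; $[u]$ denotes the orbit of $u$, $|[u]|$ its cardinality, $(\mathbb{Z}_k)_u=\{g\in\mathbb{Z}_k: gu=u\}$ the stabilizer, and $[n]^k/\mathbb{Z}_k$ the set of orbits. *)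

theory Defs
  imports Complex_Main
begin

(* A vector of the full Fock space F(C^n) is represented by its (finitely supported)
   coefficient function w \<mapsto> <x, e_w>, w a word; e_\<epsilon> = e_[] is the vacuum 1. *)

type_synonym fock = "nat list \<Rightarrow> complex"

(* an element of F(C^n)^n: component i (1 \<le> i \<le> n) *)
type_synonym fock_tuple = "nat \<Rightarrow> fock"

definition words :: "nat \<Rightarrow> nat \<Rightarrow> nat list set" where
  "words n k = {w. length w = k \<and> set w \<subseteq> {1..n}}"

definition vac :: fock where
  "vac = (\<lambda>w. if w = [] then 1 else 0)"

(* left creation operator l_j e_w = e_{jw} *)
definition lcre :: "nat \<Rightarrow> fock \<Rightarrow> fock" where
  "lcre j x = (\<lambda>w. case w of [] \<Rightarrow> 0 | a # v \<Rightarrow> (if a = j then x v else 0))"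

definition lmon :: "nat list \<Rightarrow> fock \<Rightarrow> fock" where
  "lmon u = foldr (\<lambda>j f. lcre j \<circ> f) u id"

(* \<delta>^l(l_u)[1 \<oplus> ... \<oplus> 1]:  component i is
   \<Sum>_{j : u_j = i} l_{u_{j+1}...u_p u_1...u_{j-1}} 1  (0-based list index j) *)
definition cgrad_vac :: "nat list \<Rightarrow> fock_tuple" where
  "cgrad_vac u = (\<lambda>i w. \<Sum>j<length u.
      if u ! j = i then lmon (drop (Suc j) u @ take j u) vac w else 0)"

(* \<delta>^l((C^l_<n>)_{k+1})[1 \<oplus> ... \<oplus> 1]: images of all \<Sum>_u c_u l_u, u \<in> [n]^{k+1} *)
definition cgrad_image :: "nat \<Rightarrow> nat \<Rightarrow> fock_tuple set" where
  "cgrad_image n k = {(\<lambda>i w. \<Sum>u\<in>words n (Suc k). c u * cgrad_vac u i w) | c. True}"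

(* inner products (linear in first argument) *)
definition fock_inner :: "fock \<Rightarrow> fock \<Rightarrow> complex" where
  "fock_inner x y = (\<Sum>w\<in>{w. x w \<noteq> 0 \<and> y w \<noteq> 0}. x w * cnj (y w))"

definition tuple_inner :: "nat \<Rightarrow> fock_tuple \<Rightarrow> fock_tuple \<Rightarrow> complex" where
  "tuple_inner n x y = (\<Sum>i=1..n. fock_inner (x i) (y i))"

definition tuple_span :: "fock_tuple set \<Rightarrow> fock_tuple set" where
  "tuple_span S = {x. \<exists>T c. finite T \<and> T \<subseteq> S \<and> x = (\<lambda>i w. \<Sum>s\<in>T. c s * s i w)}"

definition is_onb :: "nat \<Rightarrow> fock_tuple set \<Rightarrow> fock_tuple set \<Rightarrow> bool" where
  "is_onb n S V \<longleftrightarrow> S \<subseteq> V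
     \<and> (\<forall>x\<in>S. \<forall>y\<in>S. tuple_inner n x y = (if x = y then 1 else 0))
     \<and> V \<subseteq> tuple_span S"

definition rot :: "nat list \<Rightarrow> nat list" where
  "rot w = (if w = [] then [] else last w # butlast w)"

definition orbit :: "nat list \<Rightarrow> nat list set" where
  "orbit u = {(rot ^^ g) u | g. g < length u}"

definition stab :: "nat list \<Rightarrow> nat set" where
  "stab u = {g. g < length u \<and> (rot ^^ g) u = u}"

definition orbits :: "nat \<Rightarrow> nat \<Rightarrow> nat list set set" where
  "orbits n m = orbit ` words n m"

definition Fvec :: "nat list \<Rightarrow> fock_tuple" where
  "Fvec u = (\<lambda>i w. cgrad_vac u i w /
      (of_nat (card (stab u)) * complex_of_real (sqrt (real (card (orbit u))))))"

definition Forb :: "nat list set \<Rightarrow> fock_tuple" where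
  "Forb Orb = Fvec (SOME u. u \<in> Orb)"

definition S_set :: "nat \<Rightarrow> nat \<Rightarrow> fock_tuple set" where
  "S_set n k = Forb ` orbits n (Suc k)"

end

theory Submission
  imports Defs
begin

(* The coefficient of e_w in slot i of \<delta>^l(l_u)[1 \<oplus> \<dots> \<oplus> 1] counts the cyclic shifts of u
   equal to the word w i.  Each element of the orbit [u] arises from exactly |(Z_{k+1})_u| shifts,
   so F([u]) is the normalised indicator of [u].  Distinct orbits are disjoint, hence these
   indicators are orthonormal, and every \<delta>^l(l_u)[1 \<oplus> \<dots> \<oplus> 1] is a multiple of one of them. *)

lemma sum_lessThan_shift_periodic:
  fixes F :: "nat \<Rightarrow> 'a::cancel_comm_monoid_add"
  assumes periodic: "\<And>r. F (r + L) = F r"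
  shows "(\<Sum>r<L. F (r + a)) = (\<Sum>r<L. F r)"
proof (induction a)
  case (Suc a)
  let ?G = "\<lambda>r. F (r + a)"
  have "?G 0 + (\<Sum>r<L. F (r + Suc a)) = (\<Sum>r<Suc L. ?G r)"
    by (subst sum.lessThan_Suc_shift) simp
  also have "\<dots> = (\<Sum>r<L. ?G r) + ?G L"
    by simp
  also have "?G L = ?G 0"
    using periodic[of a] by (simp add: add.commute)
  finally show ?case
    using Suc.IH by (simp add: add.commute)
qed simp

lemma rotate1_rot: "rotate1 (rot w) = w"
  by (cases w rule: rev_cases) (auto simp: rot_def)

lemma rot_rotate1: "rot (rotate1 w) = w"
  by (cases w) (auto simp: rot_def)

lemma length_rot [simp]: "length (rot w) = length w"
  by (cases w rule: rev_cases) (auto simp: rot_def)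

lemma length_funpow_rot [simp]: "length ((rot ^^ g) w) = length w"
  by (induction g) auto

lemma rotate_funpow_rot: "rotate g ((rot ^^ g) w) = w"
  by (induction g arbitrary: w) (auto simp: rotate1_rotate_swap rotate1_rot)

lemma funpow_rot_rotate: "(rot ^^ g) (rotate g w) = w"
  by (induction g arbitrary: w) (auto simp: funpow_Suc_right rotate1_rotate_swap rot_rotate1)

lemma inj_rotate: "inj (rotate a)"
  unfolding rotate_def by (intro inj_fn inj_rotate1)

lemma stab_eq: "stab u = {g. g < length u \<and> rotate g u = u}"
  unfolding stab_def by (metis rotate_funpow_rot funpow_rot_rotate)

lemma funpow_rot_eq_rotate: "g \<le> length w \<Longrightarrow> (rot ^^ g) w = rotate (length w - g) w"
  by (metis rotate_funpow_rot rotate_rotate le_add_diff_inverse2 length_funpow_rot rotate_id mod_self)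

lemma orbit_eq_range_rotate:
  assumes "u \<noteq> []"
  shows "orbit u = range (\<lambda>r. rotate r u)"
proof -
  have rotate_funpow: "\<exists>g < length u. (rot ^^ g) u = rotate r u" for r
  proof -
    let ?m = "r mod length u"
    define g where "g = (length u - ?m) mod length u"
    have "(g + ?m) mod length u = 0"
      using assms by (simp add: g_def mod_add_left_eq)
    then have "rotate g (rotate r u) = u"
      by (metis rotate_conv_mod rotate_id rotate_rotate length_rotate)
    then have "(rot ^^ g) u = rotate r u"
      by (metis funpow_rot_rotate)
    moreover have "g < length u"
      using assms by (simp add: g_def)
    ultimately show ?thesis
      by blast
  qed
  show ?thesis
  proof
    show "orbit u \<subseteq> range (\<lambda>r. rotate r u)"
      unfolding orbit_def using funpow_rot_eq_rotate by (auto intro: less_imp_le)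
    show "range (\<lambda>r. rotate r u) \<subseteq> orbit u"
    proof
      fix x assume "x \<in> range (\<lambda>r. rotate r u)"
      then obtain g where "g < length u" "(rot ^^ g) u = x"
        using rotate_funpow by blast
      then show "x \<in> orbit u"
        unfolding orbit_def by blast
    qed
  qed
qed

lemma rotate_in_orbit: "u \<noteq> [] \<Longrightarrow> rotate r u \<in> orbit u"
  by (simp add: orbit_eq_range_rotate)

lemma self_in_orbit: "u \<noteq> [] \<Longrightarrow> u \<in> orbit u"
  using rotate_in_orbit[of u 0] by simp

lemma orbit_rotate: "orbit (rotate a u) = orbit u"
proof (cases "u = []")
  case False
  have "rotate r u = rotate (r + (length u - 1) * a + a) u" for r
  proof -
    have "r + (length u - 1) * a + a = r + a * length u"
      using False by (cases "length u") (auto simp: algebra_simps)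
    then show ?thesis
      by (metis mod_mult_self1 rotate_conv_mod)
  qed
  then have "range (\<lambda>r. rotate r u) = range (\<lambda>r. rotate (r + a) u)"
    by (auto simp: image_def)
  then show ?thesis
    using False by (simp add: orbit_eq_range_rotate rotate_rotate)
qed simp

lemma orbit_eq_if_mem: "u \<noteq> [] \<Longrightarrow> v \<in> orbit u \<Longrightarrow> orbit v = orbit u"
  by (auto simp: orbit_eq_range_rotate orbit_rotate)

lemma orbit_eq_if_common_mem:
  "u \<noteq> [] \<Longrightarrow> v \<noteq> [] \<Longrightarrow> x \<in> orbit u \<Longrightarrow> x \<in> orbit v \<Longrightarrow> orbit u = orbit v"
  by (metis orbit_eq_if_mem)

lemma finite_orbit: "finite (orbit u)"
  unfolding orbit_def by simp

lemma orbit_Nil [simp]: "orbit [] = {}"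
  by (simp add: orbit_def)

lemma orbit_subset_words: "u \<in> words n m \<Longrightarrow> orbit u \<subseteq> words n m"
  by (cases "u = []") (auto simp: orbit_eq_range_rotate words_def)

lemma sum_rotate_shift:
  fixes f :: "'b list \<Rightarrow> 'a::cancel_comm_monoid_add"
  shows "(\<Sum>r<length u. f (rotate (r + a) u)) = (\<Sum>r<length u. f (rotate r u))"
  by (rule sum_lessThan_shift_periodic) (metis mod_add_self2 rotate_conv_mod)

lemma card_rotations_eq:
  assumes "u \<noteq> []"
  shows "card {r. r < length u \<and> rotate r u = x} = (if x \<in> orbit u then card (stab u) else 0)"
proof (cases "x \<in> orbit u")
  case True
  then obtain a where x: "x = rotate a u"
    using assms by (auto simp: orbit_eq_range_rotate)
  have "card {r. r < length u \<and> rotate r u = x} = (\<Sum>r<length u. of_bool (rotate r u = x))"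
    by (simp add: Int_def)
  also have "\<dots> = (\<Sum>r<length u. of_bool (rotate (r + a) u = rotate a u))"
    unfolding x by (rule sum_rotate_shift[symmetric])
  also have "\<dots> = (\<Sum>r<length u. of_bool (rotate r u = u))"
  proof (rule sum.cong)
    fix r
    have "rotate (r + a) u = rotate a (rotate r u)"
      by (simp add: rotate_rotate add.commute)
    then show "of_bool (rotate (r + a) u = rotate a u) = (of_bool (rotate r u = u) :: nat)"
      by (simp add: inj_eq[OF inj_rotate])
  qed simp
  also have "\<dots> = card (stab u)"
    by (simp add: stab_eq Int_def)
  finally show ?thesis
    using True by simp
next
  case False
  then show ?thesis
    using rotate_in_orbit[OF assms] by auto
qed

lemma lmon_vac: "lmon v vac w = (if w = v then 1 else 0)"
proof (induction v arbitrary: w)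
  case Nil
  then show ?case
    by (simp add: lmon_def vac_def)
next
  case (Cons a v)
  then show ?case
    by (cases w) (auto simp: lmon_def lcre_def)
qed

lemma rotate_Suc_eq_snoc_nth:
  assumes "j < length u"
  shows "rotate (Suc j) u = (drop (Suc j) u @ take j u) @ [u ! j]"
proof -
  have "rotate (Suc j) u = drop (Suc j) u @ take (Suc j) u"
    using assms by (cases "Suc j = length u") (simp_all add: rotate_drop_take)
  then show ?thesis
    using assms by (simp add: take_Suc_conv_app_nth)
qed

lemma cgrad_vac_eq:
  assumes "u \<noteq> []"
  shows "cgrad_vac u i w = (if w @ [i] \<in> orbit u then of_nat (card (stab u)) else 0)"
proof -
  have "cgrad_vac u i w = (\<Sum>j<length u. of_bool (rotate (Suc j) u = w @ [i]))"
    unfolding cgrad_vac_def lmon_vac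
  proof (rule sum.cong)
    fix j assume "j \<in> {..<length u}"
    then have "rotate (Suc j) u = w @ [i] \<longleftrightarrow> u ! j = i \<and> w = drop (Suc j) u @ take j u"
      by (auto simp: rotate_Suc_eq_snoc_nth simp del: rotate_Suc)
    then show "(if u ! j = i then if w = drop (Suc j) u @ take j u then 1 else 0 else 0)
        = (of_bool (rotate (Suc j) u = w @ [i]) :: complex)"
      by auto
  qed simp
  also have "\<dots> = (\<Sum>j<length u. of_bool (rotate j u = w @ [i]))"
    using sum_rotate_shift[where f = "\<lambda>x. of_bool (x = w @ [i]) :: complex" and a = 1] by simp
  also have "\<dots> = of_nat (card {r. r < length u \<and> rotate r u = w @ [i]})"
    by (simp add: Int_def)
  finally show ?thesis
    using card_rotations_eq[OF assms] by simp
qed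

lemma card_stab_pos: "u \<noteq> [] \<Longrightarrow> 0 < card (stab u)"
  by (auto simp: card_gt_0_iff stab_def)

lemma card_orbit_pos: "u \<noteq> [] \<Longrightarrow> 0 < card (orbit u)"
  using finite_orbit self_in_orbit card_gt_0_iff by blast

(* Component i of the unit vector \<Sum>_{x \<in> A} e_x / sqrt |A|, under e_{w i} \<mapsto> e_w in slot i. *)
definition unit_indicator :: "nat list set \<Rightarrow> fock_tuple" where
  "unit_indicator A =
     (\<lambda>i w. if w @ [i] \<in> A then complex_of_real (1 / sqrt (real (card A))) else 0)"

lemma cgrad_vac_eq_scaled_unit_indicator:
  assumes "u \<noteq> []"
  shows "cgrad_vac u i w = of_nat (card (stab u)) * complex_of_real (sqrt (real (card (orbit u))))
           * unit_indicator (orbit u) i w"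
  using card_orbit_pos[OF assms] by (simp add: cgrad_vac_eq[OF assms] unit_indicator_def)

lemma Fvec_eq_unit_indicator:
  assumes "u \<noteq> []"
  shows "Fvec u = unit_indicator (orbit u)"
  using card_stab_pos[OF assms] card_orbit_pos[OF assms]
  by (simp add: Fvec_def cgrad_vac_eq_scaled_unit_indicator[OF assms])

lemma fock_inner_indicators:
  assumes "a \<noteq> 0" "b \<noteq> 0"
  shows "fock_inner (\<lambda>w. if w \<in> A then a else 0) (\<lambda>w. if w \<in> B then b else 0)
           = of_nat (card (A \<inter> B)) * (a * cnj b)"
proof -
  have "{w. (if w \<in> A then a else 0) \<noteq> 0 \<and> (if w \<in> B then b else 0) \<noteq> 0} = A \<inter> B"
    using assms by auto
  then show ?thesis
    unfolding fock_inner_def by simp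
qed

lemma sum_card_snoc_preimage:
  assumes "finite I" "finite A" "\<forall>x\<in>A. x \<noteq> [] \<and> last x \<in> I"
  shows "(\<Sum>i\<in>I. card {w. w @ [i] \<in> A}) = card A"
proof -
  have "finite {w. w @ [i] \<in> A}" for i
    using finite_vimageI[OF \<open>finite A\<close>, of "\<lambda>w. w @ [i]"] by (simp add: vimage_def inj_def)
  moreover have "bij_betw (\<lambda>(i, w). w @ [i]) (SIGMA i:I. {w. w @ [i] \<in> A}) A"
  proof (rule bij_betw_imageI)
    show "inj_on (\<lambda>(i, w). w @ [i]) (SIGMA i:I. {w. w @ [i] \<in> A})"
      by (auto simp: inj_on_def)
    have "x \<in> (\<lambda>(i, w). w @ [i]) ` (SIGMA i:I. {w. w @ [i] \<in> A})" if "x \<in> A" for x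
      using that assms(3) by (intro image_eqI[of _ _ "(last x, butlast x)"]) auto
    then show "(\<lambda>(i, w). w @ [i]) ` (SIGMA i:I. {w. w @ [i] \<in> A}) = A"
      by auto
  qed
  ultimately show ?thesis
    using \<open>finite I\<close> by (simp add: bij_betw_same_card[symmetric])
qed

lemma tuple_inner_unit_indicator:
  assumes "finite A" "A \<noteq> {}" "finite B" "B \<noteq> {}" "\<forall>x\<in>A. x \<noteq> [] \<and> last x \<in> {1..n}"
  shows "tuple_inner n (unit_indicator A) (unit_indicator B)
           = complex_of_real (real (card (A \<inter> B)) / (sqrt (real (card A)) * sqrt (real (card B))))"
proof -
  define a where "a = complex_of_real (1 / sqrt (real (card A)))"
  define b where "b = complex_of_real (1 / sqrt (real (card B)))"
  have "a \<noteq> 0" "b \<noteq> 0"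
    using assms by (simp_all add: a_def b_def card_gt_0_iff)
  have "fock_inner (unit_indicator A i) (unit_indicator B i)
      = of_nat (card {w. w @ [i] \<in> A \<inter> B}) * (a * cnj b)" for i
    unfolding unit_indicator_def a_def[symmetric] b_def[symmetric]
    using fock_inner_indicators[OF \<open>a \<noteq> 0\<close> \<open>b \<noteq> 0\<close>, of "{w. w @ [i] \<in> A}" "{w. w @ [i] \<in> B}"]
    by (simp add: Collect_conj_eq)
  then have "tuple_inner n (unit_indicator A) (unit_indicator B)
      = (\<Sum>i=1..n. of_nat (card {w. w @ [i] \<in> A \<inter> B}) * (a * cnj b))"
    by (simp add: tuple_inner_def)
  also have "\<dots> = of_nat (\<Sum>i=1..n. card {w. w @ [i] \<in> A \<inter> B}) * (a * cnj b)"
    by (simp only: sum_distrib_right of_nat_sum)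
  also have "(\<Sum>i=1..n. card {w. w @ [i] \<in> A \<inter> B}) = card (A \<inter> B)"
    using assms by (intro sum_card_snoc_preimage) auto
  finally show ?thesis
    by (simp add: a_def b_def)
qed

lemma words_Suc_nonempty: "u \<in> words n (Suc k) \<Longrightarrow> u \<noteq> []"
  by (auto simp: words_def)

lemma finite_words: "finite (words n m)"
  using finite_lists_length_eq[of "{1..n}" m] by (simp add: words_def conj_commute)

lemma tuple_inner_unit_indicator_orbit:
  assumes u: "u \<in> words n (Suc k)" and v: "v \<in> words n (Suc k)"
  shows "tuple_inner n (unit_indicator (orbit u)) (unit_indicator (orbit v))
           = (if orbit u = orbit v then 1 else 0)"
proof -
  have "u \<noteq> []" "v \<noteq> []"
    using u v by (simp_all add: words_Suc_nonempty)
  have "x \<noteq> [] \<and> last x \<in> {1..n}" if "x \<in> orbit u" for x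
    using orbit_subset_words[OF u] that last_in_set[of x] by (fastforce simp: words_def)
  then have inner: "tuple_inner n (unit_indicator (orbit u)) (unit_indicator (orbit v))
      = complex_of_real (real (card (orbit u \<inter> orbit v))
          / (sqrt (real (card (orbit u))) * sqrt (real (card (orbit v)))))"
    using finite_orbit self_in_orbit[OF \<open>u \<noteq> []\<close>] self_in_orbit[OF \<open>v \<noteq> []\<close>]
    by (intro tuple_inner_unit_indicator) auto
  show ?thesis
  proof (cases "orbit u = orbit v")
    case True
    then show ?thesis
      using inner card_orbit_pos[OF \<open>u \<noteq> []\<close>] by simp
  next
    case False
    then have "orbit u \<inter> orbit v = {}"
      using orbit_eq_if_common_mem[OF \<open>u \<noteq> []\<close> \<open>v \<noteq> []\<close>] by blast
    then show ?thesis
      using inner False by simp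
  qed
qed

lemma unit_indicator_orbits_orthonormal:
  assumes "x \<in> unit_indicator ` orbits n (Suc k)" "y \<in> unit_indicator ` orbits n (Suc k)"
  shows "tuple_inner n x y = (if x = y then 1 else 0)"
proof -
  obtain u v where u: "u \<in> words n (Suc k)" "x = unit_indicator (orbit u)"
    and v: "v \<in> words n (Suc k)" "y = unit_indicator (orbit v)"
    using assms by (auto simp: orbits_def)
  have "x \<noteq> y" if "orbit u \<noteq> orbit v"
    using that tuple_inner_unit_indicator_orbit[OF u(1) u(1)]
      tuple_inner_unit_indicator_orbit[OF u(1) v(1)] u(2) v(2)
    by auto
  then show ?thesis
    using tuple_inner_unit_indicator_orbit[OF u(1) v(1)] u(2) v(2) by auto
qed

lemma S_set_eq: "S_set n k = unit_indicator ` orbits n (Suc k)"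
proof -
  have "Forb (orbit u) = unit_indicator (orbit u)" if "u \<in> words n (Suc k)" for u
  proof -
    have "u \<noteq> []"
      using that by (rule words_Suc_nonempty)
    have "(SOME v. v \<in> orbit u) \<in> orbit u"
      using self_in_orbit[OF \<open>u \<noteq> []\<close>] by (rule someI)
    then show ?thesis
      unfolding Forb_def using \<open>u \<noteq> []\<close>
      by (metis Fvec_eq_unit_indicator orbit_eq_if_mem orbit_Nil empty_iff)
  qed
  then show ?thesis
    unfolding S_set_def orbits_def by (auto simp: image_image)
qed

lemma unit_indicator_orbit_in_cgrad_image:
  assumes u: "u \<in> words n (Suc k)"
  shows "unit_indicator (orbit u) \<in> cgrad_image n k"
proof -
  define K where "K = of_nat (card (stab u)) * complex_of_real (sqrt (real (card (orbit u))))"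
  have "K \<noteq> 0"
    using card_stab_pos card_orbit_pos words_Suc_nonempty[OF u] by (simp add: K_def)
  have "(\<Sum>v\<in>words n (Suc k). (if v = u then inverse K else 0) * cgrad_vac v i w)
      = (\<Sum>v\<in>words n (Suc k). if v = u then inverse K * cgrad_vac v i w else 0)" for i w
    by (rule sum.cong) simp_all
  also have "\<dots> i w = inverse K * cgrad_vac u i w" for i w
    using u finite_words by simp
  also have "\<dots> i w = unit_indicator (orbit u) i w" for i w
    using \<open>K \<noteq> 0\<close> cgrad_vac_eq_scaled_unit_indicator[OF words_Suc_nonempty[OF u], of i w]
    by (simp add: K_def[symmetric] field_simps)
  finally have eq: "unit_indicator (orbit u)
      = (\<lambda>i w. \<Sum>v\<in>words n (Suc k). (if v = u then inverse K else 0) * cgrad_vac v i w)"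
    by (intro ext) simp
  show ?thesis
    unfolding cgrad_image_def eq
    by (intro CollectI exI[where x = "\<lambda>v. if v = u then inverse K else 0"] conjI refl TrueI)
qed

lemma tuple_span_lincomb:
  assumes "finite W"
  shows "(\<lambda>i w. \<Sum>u\<in>W. c u * h u i w) \<in> tuple_span (h ` W)"
proof -
  define d where "d s = (\<Sum>u\<in>{u \<in> W. h u = s}. c u)" for s
  have "(\<Sum>u\<in>W. c u * h u i w) = (\<Sum>s\<in>h ` W. d s * s i w)" for i w
    unfolding d_def sum_distrib_right
    using sum.image_gen[OF assms, of "\<lambda>u. c u * h u i w" h] by simp
  then show ?thesis
    unfolding tuple_span_def using assms by blast
qed

lemma cgrad_image_subset_span: "cgrad_image n k \<subseteq> tuple_span (unit_indicator ` orbits n (Suc k))"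
proof
  fix x assume "x \<in> cgrad_image n k"
  then obtain c where x: "x = (\<lambda>i w. \<Sum>u\<in>words n (Suc k). c u * cgrad_vac u i w)"
    unfolding cgrad_image_def by blast
  define c' where "c' u = c u * of_nat (card (stab u)) * complex_of_real (sqrt (real (card (orbit u))))"
    for u
  have "x = (\<lambda>i w. \<Sum>u\<in>words n (Suc k). c' u * (unit_indicator \<circ> orbit) u i w)"
    unfolding x c'_def
    by (intro ext sum.cong refl) (simp add: cgrad_vac_eq_scaled_unit_indicator words_Suc_nonempty)
  then show "x \<in> tuple_span (unit_indicator ` orbits n (Suc k))"
    using tuple_span_lincomb[OF finite_words] by (simp add: orbits_def image_comp)
qed

theorem theorem3p1:
  fixes n k :: nat
  assumes "n \<ge> 1"
  shows "(\<forall>u\<in>words n (Suc k). \<forall>v\<in>orbit u. Fvec v = Fvec u)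
         \<and> is_onb n (S_set n k) (cgrad_image n k)"
proof
  show "\<forall>u\<in>words n (Suc k). \<forall>v\<in>orbit u. Fvec v = Fvec u"
    using Fvec_eq_unit_indicator orbit_eq_if_mem orbit_subset_words words_Suc_nonempty
    by (metis subsetD)
  show "is_onb n (S_set n k) (cgrad_image n k)"
    unfolding is_onb_def S_set_eq
    using unit_indicator_orbit_in_cgrad_image unit_indicator_orbits_orthonormal cgrad_image_subset_span
    by (auto simp: orbits_def)
qed

end
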